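(* For every $k\ge1$, $\langle B_k\rangle=\langle C_k\rangle$. (Moreover $|B_k|=|C_k|=2^k-k-1$ and the sets of $B_k$, viewed as characteristic vectors in $\mathbb{Z}_2^{2^k}$, are linearly independent, so $C_k$ is also a basis of this subspace.)
   Context: For subsets $x,y$ of $[n]=\{1,\dots,n\}$, $x\oplus y$ is the symmetric difference. For a family $X$ of subsets of $[n]$, its span $\langle X\rangle$ is the set of all symmetric differences $x_1\oplus\cdots\oplus x_t$ of finitely many members of $X$ (including the empty set for $t=0$). For a set $x$ of integers and integer $t\ge1$, $t\cdot x:=\{ti:i\in x\}$, applied elementwise to families. Define $B_1:=\emptyset$ and for $k\ge2$, $B_k:=B_{k-1}\cup\{\{i,2^{k-1}+i\}: 1\le i\le 2^{k-1}-1\}$. Define $O_1:=C_1:=\emptyset$ and for $k\ge2$: $O_k:=\{\{2i-1,2i+1\}:1\le i\le 2^{k-1}-1\}$ and $C_k:=O_k\cup 2\cdot C_{k-1}$. *)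

theory Defs
  imports Main
begin

definition sdiff :: "nat set \<Rightarrow> nat set \<Rightarrow> nat set" where
  "sdiff x y = (x - y) \<union> (y - x)"

definition sdiff_list :: "nat set list \<Rightarrow> nat set" where
  "sdiff_list xs = foldr sdiff xs {}"

definition span2 :: "nat set set \<Rightarrow> nat set set" where
  "span2 X = {sdiff_list xs | xs. set xs \<subseteq> X}"

text \<open>Linear independence over Z_2 of characteristic vectors: no nonempty
  collection of distinct members has empty symmetric difference.\<close>
definition lin_indep2 :: "nat set set \<Rightarrow> bool" where
  "lin_indep2 X \<longleftrightarrow> (\<forall>xs. set xs \<subseteq> X \<and> distinct xs \<and> xs \<noteq> [] \<longrightarrow> sdiff_list xs \<noteq> {})"

definition smul :: "nat \<Rightarrow> nat set \<Rightarrow> nat set" where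
  "smul t x = (\<lambda>i. t * i) ` x"

definition smul_fam :: "nat \<Rightarrow> nat set set \<Rightarrow> nat set set" where
  "smul_fam t X = smul t ` X"

text \<open>B_k for k \<ge> 1 (the value at k = 0 is irrelevant and set to the empty family).\<close>
fun B :: "nat \<Rightarrow> nat set set" where
  "B 0 = {}"
| "B (Suc 0) = {}"
| "B (Suc (Suc k)) = B (Suc k) \<union> {{i, 2^(Suc k) + i} | i. 1 \<le> i \<and> i \<le> 2^(Suc k) - 1}"

definition O_fam :: "nat \<Rightarrow> nat set set" where
  "O_fam k = (if k \<le> 1 then {} else {{2*i - 1, 2*i + 1} | i. 1 \<le> i \<and> i \<le> 2^(k-1) - 1})"

fun C :: "nat \<Rightarrow> nat set set" where
  "C 0 = {}"
| "C (Suc 0) = {}"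
| "C (Suc (Suc k)) = O_fam (Suc (Suc k)) \<union> smul_fam 2 (C (Suc k))"

end

theory Submission
  imports Defs
begin

(*
  Call a and b linked by X if a = b or {a, b} lies in the span of X; this is an equivalence
  relation (the connected components of the graph with edge set X). Every odd number below
  2^(k+1) is linked to 1 both by B_(k+1), through the pairs {r, 2^k + r}, and by O_(k+1),
  through the chain {1,3}, {3,5}, ...; hence each of these two families spans all pairs of
  odd numbers below 2^(k+1). The members of B_(k+1) with even entries are exactly 2 B_k, so
  <B_(k+1)> = <O_(k+1) \<union> 2 B_k>, and the induction hypothesis <B_k> = <C_k> turns this into
  <O_(k+1) \<union> 2 C_k> = <C_(k+1)>.
  In both families distinct members have distinct maxima, so in a nonempty sum of distinct
  members the largest maximum occurs exactly once and survives: both are independent. Both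
  grow by 2^k - 1 members from k to k + 1, which gives the cardinality 2^k - k - 1.
*)

lemma sdiff_assoc: "sdiff (sdiff a b) c = sdiff a (sdiff b c)"
  by (auto simp: sdiff_def)

lemma sdiff_empty [simp]: "sdiff a {} = a"
  by (simp add: sdiff_def)

lemma sdiff_list_simps [simp]:
  "sdiff_list [] = {}"
  "sdiff_list (x # xs) = sdiff x (sdiff_list xs)"
  by (simp_all add: sdiff_list_def)

lemma sdiff_list_append: "sdiff_list (xs @ ys) = sdiff (sdiff_list xs) (sdiff_list ys)"
  by (induction xs) (auto simp: sdiff_assoc sdiff_def)

lemma mem_sdiff_list_iff: "n \<in> sdiff_list xs \<longleftrightarrow> odd (length (filter (\<lambda>x. n \<in> x) xs))"
  by (induction xs) (auto simp: sdiff_def)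

lemma image_sdiff: "inj f \<Longrightarrow> f ` sdiff a b = sdiff (f ` a) (f ` b)"
  by (simp add: sdiff_def image_Un image_set_diff)

lemma image_sdiff_list: "inj f \<Longrightarrow> f ` sdiff_list xs = sdiff_list (map ((`) f) xs)"
  by (induction xs) (simp_all add: image_sdiff)

lemma span2_iff: "y \<in> span2 X \<longleftrightarrow> (\<exists>xs. set xs \<subseteq> X \<and> y = sdiff_list xs)"
  by (auto simp: span2_def)

lemma span2_empty: "{} \<in> span2 X"
  unfolding span2_iff by (intro exI[of _ "[]"]) simp

lemma subset_span2: "X \<subseteq> span2 X"
proof
  fix x assume "x \<in> X"
  then show "x \<in> span2 X"
    unfolding span2_iff by (intro exI[of _ "[x]"]) simp
qed

lemma span2_sdiff: "a \<in> span2 X \<Longrightarrow> b \<in> span2 X \<Longrightarrow> sdiff a b \<in> span2 X"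
  unfolding span2_iff by (metis sdiff_list_append set_append Un_subset_iff)

lemma span2_subset_iff: "span2 X \<subseteq> span2 Y \<longleftrightarrow> X \<subseteq> span2 Y"
proof
  assume "X \<subseteq> span2 Y"
  have "set xs \<subseteq> X \<Longrightarrow> sdiff_list xs \<in> span2 Y" for xs
    by (induction xs) (use \<open>X \<subseteq> span2 Y\<close> in \<open>auto intro: span2_empty span2_sdiff\<close>)
  then show "span2 X \<subseteq> span2 Y"
    by (auto simp: span2_iff)
qed (use subset_span2 in blast)

lemma span2_mono: "X \<subseteq> Y \<Longrightarrow> span2 X \<subseteq> span2 Y"
  using subset_span2 span2_subset_iff by blast

lemma span2_eqI: "X \<subseteq> span2 Y \<Longrightarrow> Y \<subseteq> span2 X \<Longrightarrow> span2 X = span2 Y"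
  using span2_subset_iff by blast

lemma span2_Un_cong:
  assumes "span2 X = span2 Y"
  shows "span2 (A \<union> X) = span2 (A \<union> Y)"
  using assms subset_span2 span2_mono[of A "A \<union> _"] span2_mono[of _ "A \<union> _"]
  by (intro span2_eqI) blast+

lemma image_span2_subset:
  assumes "inj f"
  shows "(`) f ` span2 X \<subseteq> span2 ((`) f ` X)"
proof
  fix y assume "y \<in> (`) f ` span2 X"
  then obtain xs where "set xs \<subseteq> X" "y = f ` sdiff_list xs"
    by (auto simp: span2_iff)
  then show "y \<in> span2 ((`) f ` X)"
    using assms unfolding span2_iff image_sdiff_list[OF assms]
    by (intro exI[of _ "map ((`) f) xs"]) auto
qed

lemma inj_smul: "0 < t \<Longrightarrow> inj (smul t)"
  unfolding smul_def by (simp add: inj_def inj_image_eq_iff)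

lemma card_smul_fam: "0 < t \<Longrightarrow> card (smul_fam t X) = card X"
  unfolding smul_fam_def using inj_smul by (simp add: card_image inj_on_def)

lemma Max_smul: "finite x \<Longrightarrow> x \<noteq> {} \<Longrightarrow> Max (smul t x) = t * Max x"
  unfolding smul_def by (simp add: mono_Max_commute mono_def)

lemma smul_doubleton: "smul t {a, b} = {t * a, t * b}"
  by (simp add: smul_def)

lemma span2_smul_fam_cong:
  assumes "0 < t" and "span2 X = span2 Y"
  shows "span2 (smul_fam t X) = span2 (smul_fam t Y)"
proof -
  have inj: "inj (\<lambda>i. t * i)"
    using assms(1) by (auto simp: inj_def)
  have "smul_fam t X \<subseteq> span2 (smul_fam t Y)" if "span2 X = span2 Y" for X Y
  proof -
    have "smul_fam t X \<subseteq> smul t ` span2 Y"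
      using subset_span2[of X] that by (auto simp: smul_fam_def)
    also have "\<dots> \<subseteq> span2 (smul_fam t Y)"
      using image_span2_subset[OF inj] by (simp add: smul_fam_def smul_def[abs_def])
    finally show ?thesis .
  qed
  then show ?thesis
    using assms(2) by (metis span2_eqI)
qed

lemma lin_indep2_if_inj_on_Max:
  assumes members: "\<And>x. x \<in> X \<Longrightarrow> finite x \<and> x \<noteq> {}" and inj: "inj_on Max X"
  shows "lin_indep2 X"
  unfolding lin_indep2_def
proof (intro allI impI)
  fix xs assume xs: "set xs \<subseteq> X \<and> distinct xs \<and> xs \<noteq> []"
  define M where "M = Max (Max ` set xs)"
  have "M \<in> Max ` set xs"
    unfolding M_def using xs by (intro Max_in) auto
  then obtain x0 where x0: "x0 \<in> set xs" "Max x0 = M"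
    by auto
  have unique: "x = x0" if "x \<in> set xs" "M \<in> x" for x
  proof -
    have "M \<le> Max x"
      using that xs members by auto
    moreover have "Max x \<le> M"
      unfolding M_def using that(1) by simp
    ultimately have "Max x = Max x0"
      using x0(2) by simp
    then show "x = x0"
      using inj_onD[OF inj] that(1) x0(1) xs by blast
  qed
  have "M \<in> x0"
    using x0 xs members Max_in by (metis subsetD)
  have "set (filter (\<lambda>x. M \<in> x) xs) = {x0}"
  proof (intro equalityI subsetI)
    fix x assume "x \<in> set (filter (\<lambda>x. M \<in> x) xs)"
    then show "x \<in> {x0}"
      using unique[of x] by simp
  qed (use x0(1) \<open>M \<in> x0\<close> in simp)
  then have "length (filter (\<lambda>x. M \<in> x) xs) = 1"
    using xs distinct_card[of "filter (\<lambda>x. M \<in> x) xs"] by simp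
  then have "M \<in> sdiff_list xs"
    unfolding mem_sdiff_list_iff by simp
  then show "sdiff_list xs \<noteq> {}"
    by blast
qed

definition linked :: "nat set set \<Rightarrow> nat \<Rightarrow> nat \<Rightarrow> bool" where
  "linked X a b \<longleftrightarrow> a = b \<or> {a, b} \<in> span2 X"

lemma linked_refl: "linked X a a"
  by (simp add: linked_def)

lemma linked_sym: "linked X a b \<Longrightarrow> linked X b a"
  by (auto simp: linked_def insert_commute)

lemma linked_trans:
  assumes "linked X a b" "linked X b c"
  shows "linked X a c"
proof (cases "a = b \<or> b = c \<or> a = c")
  case True
  then show ?thesis
    using assms by (auto simp: linked_def)
next
  case False
  then have "sdiff {a, b} {b, c} = {a, c}"
    by (auto simp: sdiff_def)
  moreover have "{a, b} \<in> span2 X" "{b, c} \<in> span2 X"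
    using assms False by (auto simp: linked_def)
  ultimately show ?thesis
    unfolding linked_def by (metis span2_sdiff)
qed

lemma linked_if_mem: "{a, b} \<in> X \<Longrightarrow> linked X a b"
  using subset_span2 by (auto simp: linked_def)

lemma linked_mono: "linked X a b \<Longrightarrow> X \<subseteq> Y \<Longrightarrow> linked Y a b"
  unfolding linked_def using span2_mono by blast

lemma pair_in_span2_if_linked: "linked X a b \<Longrightarrow> a \<noteq> b \<Longrightarrow> {a, b} \<in> span2 X"
  by (simp add: linked_def)

lemma linked_if_linked_to:
  assumes "linked X c a" "linked X c b"
  shows "linked X a b"
  using linked_trans[OF linked_sym[OF assms(1)] assms(2)] .

lemma odd_pair_in_span2:
  assumes "\<And>c. odd c \<Longrightarrow> c < N \<Longrightarrow> linked X 1 c"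
    and "odd a" "odd b" "a < N" "b < N" "a \<noteq> b"
  shows "{a, b} \<in> span2 X"
proof -
  have "linked X 1 a" "linked X 1 b"
    using assms(1-5) by simp_all
  then show ?thesis
    using assms(6) by (blast intro: pair_in_span2_if_linked linked_if_linked_to)
qed

lemma pow2_minus_Suc: "(2::nat) ^ Suc k - Suc k - 1 = (2 ^ k - k - 1) + (2 ^ k - 1)"
  using less_exp[of k] by (simp; linarith)

lemma B_Suc: "B (Suc k) = B k \<union> (\<lambda>i. {i, 2 ^ k + i}) ` {0<..<2 ^ k}"
proof (cases k)
  case (Suc k')
  have "{{i, 2 ^ k + i} | i::nat. 1 \<le> i \<and> i \<le> 2 ^ k - 1} = (\<lambda>i. {i, 2 ^ k + i}) ` {0<..<2 ^ k}"
    by (force simp: Suc_le_eq)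
  then show ?thesis
    using Suc by simp
qed auto

lemma B_eq: "B k = {{i, 2 ^ j + i} | i j. j < k \<and> 0 < i \<and> i < 2 ^ j}"
proof (induction k)
  case (Suc k)
  then show ?case
    unfolding B_Suc by (auto simp: less_Suc_eq; blast)
qed simp

lemma B_bounded:
  assumes "x \<in> B k" "m \<in> x"
  shows "m < 2 ^ k"
proof -
  obtain i j where ij: "x = {i, 2 ^ j + i}" "j < k" "i < 2 ^ j"
    using assms(1) by (auto simp: B_eq)
  have "2 ^ j + i < (2::nat) ^ Suc j"
    using ij(3) by simp
  also have "\<dots> \<le> 2 ^ k"
    using ij(2) by (intro power_increasing) simp_all
  finally show ?thesis
    using assms(2) ij(1) by auto
qed

lemma B_members: "x \<in> B k \<Longrightarrow> finite x \<and> x \<noteq> {}"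
  by (auto simp: B_eq)

lemma finite_B: "finite (B k)"
proof (rule finite_subset)
  show "B k \<subseteq> Pow {..<2 ^ k}"
    using B_bounded by blast
qed simp

lemma card_B: "card (B k) = 2 ^ k - k - 1"
proof (induction k)
  case (Suc k)
  let ?L = "(\<lambda>i::nat. {i, 2 ^ k + i}) ` {0<..<2 ^ k}"
  have card_L: "card ?L = 2 ^ k - 1"
    by (subst card_image) (auto simp: inj_on_def doubleton_eq_iff)
  have "B k \<inter> ?L = {}"
    using B_bounded by fastforce
  then have "card (B (Suc k)) = card (B k) + card ?L"
    unfolding B_Suc using finite_B by (simp add: card_Un_disjoint)
  then show ?case
    using Suc card_L pow2_minus_Suc[of k] by (simp only:)
qed (simp add: B_eq)

lemma inj_on_Max_B: "inj_on Max (B k)"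
proof (induction k)
  case (Suc k)
  let ?L = "(\<lambda>i::nat. {i, 2 ^ k + i}) ` {0<..<2 ^ k}"
  have Max_L: "Max {i, 2 ^ k + i} = 2 ^ k + i" for i :: nat
    by simp
  have "inj_on Max ?L"
    by (rule inj_onI) (auto simp: Max_L)
  moreover have "Max ` B k \<subseteq> {..<2 ^ k}"
    using B_bounded B_members Max_in by (meson image_subsetI lessThan_iff)
  moreover have "Max ` ?L \<subseteq> {2 ^ k..}"
    by (auto simp: Max_L)
  ultimately show ?case
    unfolding B_Suc inj_on_Un using Suc by fastforce
qed (simp add: B_eq)

lemma smul_fam_B_subset: "smul_fam 2 (B k) \<subseteq> B (Suc k)"
proof
  fix y assume "y \<in> smul_fam 2 (B k)"
  then obtain i j where "y = smul 2 {i, 2 ^ j + i}" "j < k" "0 < i" "i < 2 ^ j"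
    by (auto simp: smul_fam_def B_eq)
  then have "y = {2 * i, 2 ^ Suc j + 2 * i}" "Suc j < Suc k" "0 < 2 * i" "2 * i < 2 ^ Suc j"
    by (simp_all add: smul_doubleton)
  then show "y \<in> B (Suc k)"
    unfolding B_eq by blast
qed

lemma linked_B: "odd a \<Longrightarrow> a < 2 ^ k \<Longrightarrow> linked (B k) 1 a"
proof (induction k arbitrary: a)
  case (Suc k)
  consider "a = 1" | "a < 2 ^ k" | "2 ^ k \<le> a" "a \<noteq> 1"
    by linarith
  then show ?case
  proof cases
    case 1
    then show ?thesis
      by (simp add: linked_refl)
  next
    case 2
    then have "linked (B k) 1 a"
      using Suc by blast
    then show ?thesis
      unfolding B_Suc by (rule linked_mono) blast
  next
    case 3
    define r where "r = a - 2 ^ k"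
    have "k \<noteq> 0"
      using 3 Suc.prems by (cases k) auto
    then have r: "odd r" "r < 2 ^ k" "a = 2 ^ k + r"
      using 3 Suc.prems unfolding r_def by auto
    then have "{r, a} \<in> B (Suc k)"
      unfolding B_Suc by (cases r) auto
    then have "linked (B (Suc k)) r a"
      by (rule linked_if_mem)
    moreover have "linked (B k) 1 r"
      using Suc.IH r by blast
    then have "linked (B (Suc k)) 1 r"
      unfolding B_Suc by (rule linked_mono) blast
    ultimately show ?thesis
      by (rule linked_trans[rotated])
  qed
qed simp

lemma O_fam_Suc: "O_fam (Suc k) = (\<lambda>i. {2 * i - 1, 2 * i + 1}) ` {0<..<2 ^ k}"
  by (force simp: O_fam_def Suc_le_eq)

lemma O_fam_odd: "x \<in> O_fam (Suc k) \<Longrightarrow> m \<in> x \<Longrightarrow> odd m"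
  by (auto simp: O_fam_Suc)

lemma linked_O_fam:
  assumes "odd a" "a < 2 ^ Suc k"
  shows "linked (O_fam (Suc k)) 1 a"
proof -
  have chain: "i < 2 ^ k \<Longrightarrow> linked (O_fam (Suc k)) 1 (2 * i + 1)" for i
  proof (induction i)
    case (Suc i)
    have "{2 * Suc i - 1, 2 * Suc i + 1} \<in> O_fam (Suc k)"
      unfolding O_fam_Suc by (rule imageI) (use Suc.prems in simp)
    then have "linked (O_fam (Suc k)) (2 * i + 1) (2 * Suc i + 1)"
      by (simp add: linked_if_mem)
    moreover have "linked (O_fam (Suc k)) 1 (2 * i + 1)"
      using Suc.IH Suc.prems by simp
    ultimately show ?case
      by (rule linked_trans[rotated])
  qed (simp add: linked_refl)
  obtain i where i: "a = 2 * i + 1"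
    using assms(1) oddE by blast
  then have "i < 2 ^ k"
    using assms(2) by simp
  then show ?thesis
    unfolding i by (rule chain)
qed

lemma C_Suc: "C (Suc k) = O_fam (Suc k) \<union> smul_fam 2 (C k)"
  by (cases k) (simp_all add: O_fam_def smul_fam_def)

lemma smul_fam_even: "x \<in> smul_fam 2 X \<Longrightarrow> m \<in> x \<Longrightarrow> even m"
  by (auto simp: smul_fam_def smul_def)

lemma C_members: "x \<in> C k \<Longrightarrow> finite x \<and> x \<noteq> {}"
proof (induction k arbitrary: x)
  case (Suc k)
  then show ?case
    unfolding C_Suc by (auto simp: O_fam_Suc smul_fam_def smul_def)
qed simp

lemma finite_C: "finite (C k)"
  by (induction k) (simp_all add: C_Suc O_fam_Suc smul_fam_def)

lemma O_fam_disjoint_smul_fam: "O_fam (Suc k) \<inter> smul_fam 2 X = {}"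
proof -
  have "x \<notin> smul_fam 2 X" if "x \<in> O_fam (Suc k)" for x
  proof
    assume "x \<in> smul_fam 2 X"
    moreover have "x \<noteq> {}"
      using that by (auto simp: O_fam_Suc)
    then obtain m where "m \<in> x"
      by blast
    ultimately show False
      using that O_fam_odd smul_fam_even by blast
  qed
  then show ?thesis
    by blast
qed

lemma card_C: "card (C k) = 2 ^ k - k - 1"
proof (induction k)
  case (Suc k)
  have card_O: "card (O_fam (Suc k)) = 2 ^ k - 1"
    unfolding O_fam_Suc by (subst card_image) (auto simp: inj_on_def doubleton_eq_iff)
  have "finite (O_fam (Suc k))" "finite (smul_fam 2 (C k))"
    using finite_C by (simp_all add: O_fam_Suc smul_fam_def)
  then have "card (C (Suc k)) = card (C k) + card (O_fam (Suc k))"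
    unfolding C_Suc using O_fam_disjoint_smul_fam
    by (simp add: card_Un_disjoint card_smul_fam)
  then show ?case
    using Suc card_O pow2_minus_Suc[of k] by (simp only:)
qed simp

lemma inj_on_Max_C: "inj_on Max (C k)"
proof (induction k)
  case (Suc k)
  have Max_O: "Max {2 * i - 1, 2 * i + 1} = 2 * i + 1" for i :: nat
    by simp
  have "inj_on Max (O_fam (Suc k))"
    unfolding O_fam_Suc by (rule inj_onI) (auto simp: Max_O)
  moreover have "inj_on Max (smul_fam 2 (C k))"
  proof (rule inj_onI)
    fix x y assume "x \<in> smul_fam 2 (C k)" "y \<in> smul_fam 2 (C k)" "Max x = Max y"
    then obtain c d where "x = smul 2 c" "y = smul 2 d" "c \<in> C k" "d \<in> C k" "Max c = Max d"
      using C_members Max_smul by (auto simp: smul_fam_def)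
    then show "x = y"
      using Suc by (simp add: inj_on_eq_iff)
  qed
  moreover have "Max ` O_fam (Suc k) \<subseteq> Collect odd"
    unfolding O_fam_Suc by (auto simp: Max_O)
  moreover have "Max ` smul_fam 2 (C k) \<subseteq> Collect even"
    using C_members by (auto simp: smul_fam_def Max_smul)
  ultimately show ?case
    unfolding C_Suc inj_on_Un by blast
qed simp

lemma B_Suc_subset_span2: "B (Suc k) \<subseteq> span2 (O_fam (Suc k) \<union> smul_fam 2 (B k))"
proof
  fix x assume "x \<in> B (Suc k)"
  then obtain i j where x: "x = {i, 2 ^ j + i}" "j < Suc k" "0 < i" "i < 2 ^ j"
    by (auto simp: B_eq)
  then obtain j' where j': "j = Suc j'"
    by (cases j) auto
  show "x \<in> span2 (O_fam (Suc k) \<union> smul_fam 2 (B k))"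
  proof (cases "even i")
    case True
    then obtain i' where i': "i = 2 * i'"
      by blast
    have "{i', 2 ^ j' + i'} \<in> B k"
      using x i' j' unfolding B_eq by auto
    moreover have "x = smul 2 {i', 2 ^ j' + i'}"
      using x i' j' by (simp add: smul_doubleton)
    ultimately have "x \<in> smul_fam 2 (B k)"
      by (simp add: smul_fam_def)
    then show ?thesis
      using subset_span2 by blast
  next
    case False
    have "2 ^ j + i < (2::nat) ^ Suc j"
      using x(4) by simp
    also have "\<dots> \<le> 2 ^ Suc k"
      using x(2) by (intro power_increasing) simp_all
    finally have "x \<in> span2 (O_fam (Suc k))"
      unfolding x(1) using False j' x(4)
      by (intro odd_pair_in_span2[where N = "2 ^ Suc k"] linked_O_fam) simp_all
    then show ?thesis
      using span2_mono[of "O_fam (Suc k)"] by blast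
  qed
qed

lemma O_fam_subset_span2_B: "O_fam (Suc k) \<subseteq> span2 (B (Suc k))"
proof
  fix x assume "x \<in> O_fam (Suc k)"
  then obtain i where x: "x = {2 * i - 1, 2 * i + 1}" "0 < i" "i < 2 ^ k"
    by (auto simp: O_fam_Suc)
  then show "x \<in> span2 (B (Suc k))"
    unfolding x(1) by (intro odd_pair_in_span2[where N = "2 ^ Suc k"] linked_B) auto
qed

lemma span2_B_Suc: "span2 (B (Suc k)) = span2 (O_fam (Suc k) \<union> smul_fam 2 (B k))"
  using B_Suc_subset_span2 O_fam_subset_span2_B smul_fam_B_subset subset_span2
  by (intro span2_eqI) blast+

lemma span2_B_eq_span2_C: "span2 (B k) = span2 (C k)"
proof (induction k)
  case (Suc k)
  have "span2 (B (Suc k)) = span2 (O_fam (Suc k) \<union> smul_fam 2 (B k))"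
    by (rule span2_B_Suc)
  also have "\<dots> = span2 (O_fam (Suc k) \<union> smul_fam 2 (C k))"
    using Suc by (intro span2_Un_cong span2_smul_fam_cong) simp_all
  also have "\<dots> = span2 (C (Suc k))"
    by (simp add: C_Suc)
  finally show ?case .
qed simp

theorem mainTheorem4:
  fixes k :: nat
  assumes "k \<ge> 1"
  shows "span2 (B k) = span2 (C k)
       \<and> card (B k) = 2^k - k - 1 \<and> card (C k) = 2^k - k - 1
       \<and> lin_indep2 (B k) \<and> lin_indep2 (C k)"
proof -
  have "lin_indep2 (B k)"
    by (rule lin_indep2_if_inj_on_Max[OF B_members inj_on_Max_B])
  moreover have "lin_indep2 (C k)"
    by (rule lin_indep2_if_inj_on_Max[OF C_members inj_on_Max_C])
  ultimately show ?thesis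
    using span2_B_eq_span2_C card_B card_C by simp
qed

end
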